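(* Let $i=1$ if $\Phi$ is of type $\mathsf{E}_6$ and $i=7$ if $\Phi$ is of type $\mathsf{E}_7$, and let $W_i$ be the subgroup of the Weyl group $W$ generated by $S\setminus\{s_i\}$. Then for every $\alpha\in\Phi$, the reflection $s_\alpha$ lies in $W_i\cup W_is_iW_i$.
   Context: Bourbaki labelling of simple roots $\alpha_1,\dots,\alpha_n$, $s_j$ the simple reflection in $\alpha_j$, $S=\{s_1,\dots,s_n\}$, and $s_\alpha$ the reflection in the root $\alpha$. *)

theory Defs
  imports Main
begin

text \<open>Root systems of type E_n (n = 6, 7), Bourbaki labelling: Dynkin diagram
  1 - 3 - 4 - 5 - 6 - 7 with node 2 attached to node 4.
  Vectors of the root lattice are written in coordinates w.r.t. the simple roots
  alpha_1..alpha_n, as functions nat => int (coordinates outside 1..n are inert).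
  The (simply-laced) invariant form is given by the Cartan matrix.\<close>

definition E_adj :: "nat \<Rightarrow> nat \<Rightarrow> bool" where
  "E_adj k l \<longleftrightarrow> {k, l} \<in> {{1,3}, {3,4}, {4,5}, {5,6}, {6,7}, {2,4}}"

definition cartanE :: "nat \<Rightarrow> nat \<Rightarrow> int" where
  "cartanE k l = (if k = l then 2 else if E_adj k l then -1 else 0)"

definition bilE :: "nat \<Rightarrow> (nat \<Rightarrow> int) \<Rightarrow> (nat \<Rightarrow> int) \<Rightarrow> int" where
  "bilE n v w = (\<Sum>k\<in>{1..n}. \<Sum>l\<in>{1..n}. v k * cartanE k l * w l)"

text \<open>Reflection s_alpha in a root alpha (with (alpha,alpha) = 2).\<close>
definition reflE :: "nat \<Rightarrow> (nat \<Rightarrow> int) \<Rightarrow> (nat \<Rightarrow> int) \<Rightarrow> (nat \<Rightarrow> int)" where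
  "reflE n \<alpha> = (\<lambda>v k. v k - bilE n v \<alpha> * \<alpha> k)"

definition simple_root :: "nat \<Rightarrow> nat \<Rightarrow> int" where
  "simple_root j = (\<lambda>k. if k = j then 1 else 0)"

definition sE :: "nat \<Rightarrow> nat \<Rightarrow> (nat \<Rightarrow> int) \<Rightarrow> (nat \<Rightarrow> int)" where
  "sE n j = reflE n (simple_root j)"

text \<open>Subgroup of the Weyl group generated by {s_j | j \<in> J}
  (the s_j are involutions, so closure under composition gives the group).\<close>
inductive_set genW :: "nat \<Rightarrow> nat set \<Rightarrow> ((nat \<Rightarrow> int) \<Rightarrow> (nat \<Rightarrow> int)) set"
  for n :: nat and J :: "nat set" where
  genW_id: "id \<in> genW n J"
| genW_step: "w \<in> genW n J \<Longrightarrow> j \<in> J \<Longrightarrow> sE n j \<circ> w \<in> genW n J"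

definition WeylE :: "nat \<Rightarrow> ((nat \<Rightarrow> int) \<Rightarrow> (nat \<Rightarrow> int)) set" where
  "WeylE n = genW n {1..n}"

definition rootsE :: "nat \<Rightarrow> (nat \<Rightarrow> int) set" where
  "rootsE n = {w (simple_root j) | w j. w \<in> WeylE n \<and> j \<in> {1..n}}"

end

theory Submission
  imports Defs
begin

text \<open>For a root \<open>\<beta>\<close> and \<open>w \<in> W\<close> one has \<open>s\<^bsub>w\<beta>\<^esub> = w s\<^sub>\<beta> w\<inverse>\<close>. Hence if
  \<open>\<alpha> = \<plusminus>w \<alpha>\<^sub>j\<close> with \<open>w \<in> W\<^sub>i\<close>, then \<open>s\<^sub>\<alpha> = w s\<^sub>j w\<inverse>\<close> lies in \<open>W\<^sub>i\<close> when \<open>j \<noteq> i\<close> and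
  in \<open>W\<^sub>i s\<^sub>i W\<^sub>i\<close> when \<open>j = i\<close>. So it suffices that every root is \<open>W\<^sub>i\<close>-conjugate to a
  simple root up to sign. This is verified on an explicit list of the positive roots: the
  list is closed under each \<open>s\<^sub>j\<close> except for \<open>s\<^sub>j \<alpha>\<^sub>j = -\<alpha>\<^sub>j\<close>, so up to sign it contains
  the whole \<open>W\<close>-orbit of the simple roots, and each listed root is reached from a simple
  root by reflections \<open>s\<^sub>j\<close> with \<open>j \<noteq> i\<close>.\<close>

lemma cartanE_sym: "cartanE k l = cartanE l k"
  unfolding cartanE_def E_adj_def by (simp add: insert_commute)

lemma bilE_sym: "bilE n v w = bilE n w v"
  unfolding bilE_def
  by (subst sum.swap) (simp add: cartanE_sym mult.commute mult.left_commute)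

lemma bilE_diff_left: "bilE n (\<lambda>k. v k - c * a k) w = bilE n v w - c * bilE n a w"
  unfolding bilE_def by (simp add: algebra_simps sum_subtractf sum_distrib_left)

lemma bilE_diff_right: "bilE n w (\<lambda>k. v k - c * a k) = bilE n w v - c * bilE n w a"
  using bilE_diff_left bilE_sym by metis

lemma bilE_uminus_right: "bilE n v (\<lambda>k. - w k) = - bilE n v w"
  unfolding bilE_def by (simp add: sum_negf)

lemma reflE_uminus_root: "reflE n (\<lambda>k. - a k) = reflE n a"
  unfolding reflE_def by (simp add: bilE_uminus_right)

lemma reflE_uminus: "reflE n a (\<lambda>k. - v k) = (\<lambda>k. - reflE n a v k)"
  unfolding reflE_def by (simp add: bilE_uminus_right bilE_sym[of n "\<lambda>k. - v k"] bilE_sym[of n v])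

lemma reflE_reflE:
  assumes "bilE n a a = 2"
  shows "reflE n a (reflE n a v) = v"
  unfolding reflE_def by (simp add: bilE_diff_left assms)

lemma reflE_self:
  assumes "bilE n a a = 2"
  shows "reflE n a a = (\<lambda>k. - a k)"
  unfolding reflE_def by (simp add: assms)

lemma reflE_reflE_conj:
  assumes "bilE n a a = 2"
  shows "reflE n (reflE n a b) = reflE n a \<circ> reflE n b \<circ> reflE n a"
proof (intro ext)
  fix v k
  show "reflE n (reflE n a b) v k = (reflE n a \<circ> reflE n b \<circ> reflE n a) v k"
    unfolding reflE_def comp_def
    by (simp add: bilE_diff_left bilE_diff_right assms bilE_sym[of n b a]) (simp add: algebra_simps)
qed

lemma bilE_simple_root_right:
  assumes "j \<in> {1..n}"
  shows "bilE n v (simple_root j) = (\<Sum>k\<in>{1..n}. v k * cartanE k j)"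
  unfolding bilE_def simple_root_def
  by (rule sum.cong[OF refl]) (use assms in \<open>simp add: if_distrib cong: if_cong\<close>)

lemma bilE_simple_root_self:
  assumes "j \<in> {1..n}"
  shows "bilE n (simple_root j) (simple_root j) = 2"
proof -
  have "simple_root j k * cartanE k j = (if k = j then 2 else 0)" for k
    by (simp add: simple_root_def cartanE_def)
  then show ?thesis using assms by (simp add: bilE_simple_root_right)
qed

lemma sE_sE: "j \<in> {1..n} \<Longrightarrow> sE n j (sE n j v) = v"
  unfolding sE_def by (rule reflE_reflE[OF bilE_simple_root_self])

lemma sE_simple_root: "j \<in> {1..n} \<Longrightarrow> sE n j (simple_root j) = (\<lambda>k. - simple_root j k)"
  unfolding sE_def by (rule reflE_self[OF bilE_simple_root_self])

lemma sE_uminus: "sE n j (\<lambda>k. - v k) = (\<lambda>k. - sE n j v k)"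
  unfolding sE_def by (rule reflE_uminus)

lemma reflE_sE_conj: "j \<in> {1..n} \<Longrightarrow> reflE n (sE n j b) = sE n j \<circ> reflE n b \<circ> sE n j"
  unfolding sE_def by (rule reflE_reflE_conj[OF bilE_simple_root_self])

definition wordE :: "nat \<Rightarrow> nat list \<Rightarrow> (nat \<Rightarrow> int) \<Rightarrow> nat \<Rightarrow> int" where
  "wordE n ws = foldr (\<lambda>j w. sE n j \<circ> w) ws id"

lemma wordE_Nil [simp]: "wordE n [] = id"
  and wordE_Cons [simp]: "wordE n (j # ws) = sE n j \<circ> wordE n ws"
  by (simp_all add: wordE_def)

lemma wordE_append: "wordE n (ws @ vs) = wordE n ws \<circ> wordE n vs"
  by (induction ws) auto

lemma wordE_in_genW: "set ws \<subseteq> J \<Longrightarrow> wordE n ws \<in> genW n J"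
  by (induction ws) (auto intro: genW.intros)

lemma wordE_uminus: "wordE n ws (\<lambda>k. - v k) = (\<lambda>k. - wordE n ws v k)"
  by (induction ws) (auto simp: sE_uminus)

lemma reflE_wordE_conj:
  "set ws \<subseteq> {1..n} \<Longrightarrow> reflE n (wordE n ws b) = wordE n ws \<circ> reflE n b \<circ> wordE n (rev ws)"
  by (induction ws) (auto simp: reflE_sE_conj wordE_append comp_assoc)

lemma reflE_wordE_mem_double_coset:
  assumes ws: "set ws \<subseteq> {1..n} - {i}" and j: "j \<in> {1..n}" and \<beta>: "reflE n \<beta> = sE n j"
  shows "reflE n (wordE n ws \<beta>) \<in> genW n ({1..n} - {i}) \<union>
           {u \<circ> sE n i \<circ> v | u v. u \<in> genW n ({1..n} - {i}) \<and> v \<in> genW n ({1..n} - {i})}"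
proof -
  have conj: "reflE n (wordE n ws \<beta>) = wordE n ws \<circ> sE n j \<circ> wordE n (rev ws)"
    using reflE_wordE_conj[of ws n \<beta>] ws \<beta> by auto
  show ?thesis
  proof (cases "j = i")
    case True
    have "wordE n ws \<in> genW n ({1..n} - {i})" "wordE n (rev ws) \<in> genW n ({1..n} - {i})"
      using ws by (simp_all add: wordE_in_genW)
    then show ?thesis unfolding conj True by blast
  next
    case False
    have "wordE n (ws @ [j] @ rev ws) \<in> genW n ({1..n} - {i})"
      using ws j False by (intro wordE_in_genW) auto
    then show ?thesis using conj by (simp add: wordE_append comp_assoc)
  qed
qed

definition vec_of :: "nat \<Rightarrow> int list \<Rightarrow> nat \<Rightarrow> int" where
  "vec_of n xs = (\<lambda>k. if k \<in> {1..n} then xs ! (k - 1) else 0)"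

definition sE_list :: "nat \<Rightarrow> nat \<Rightarrow> int list \<Rightarrow> int list" where
  "sE_list n j xs = xs[j - 1 := xs ! (j - 1) - (\<Sum>l\<leftarrow>[1..<Suc n]. xs ! (l - 1) * cartanE l j)]"

definition simple_root_list :: "nat \<Rightarrow> nat \<Rightarrow> int list" where
  "simple_root_list n j = map (\<lambda>k. if k = j then 1 else 0) [1..<Suc n]"

lemma length_sE_list [simp]: "length (sE_list n j xs) = length xs"
  by (simp add: sE_list_def)

lemma sum_vec_of: "(\<Sum>k\<in>{1..n}. vec_of n xs k * c k) = (\<Sum>k\<leftarrow>[1..<Suc n]. xs ! (k - 1) * c k)"
proof -
  have "(\<Sum>k\<in>{1..n}. vec_of n xs k * c k) = (\<Sum>k\<in>set [1..<Suc n]. xs ! (k - 1) * c k)"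
    by (rule sum.cong) (auto simp: vec_of_def)
  then show ?thesis by (simp add: sum_list_distinct_conv_sum_set)
qed

lemma sE_vec_of:
  assumes "j \<in> {1..n}" "length xs = n"
  shows "sE n j (vec_of n xs) = vec_of n (sE_list n j xs)"
proof (rule ext)
  fix k
  have "bilE n (vec_of n xs) (simple_root j) = (\<Sum>l\<leftarrow>[1..<Suc n]. xs ! (l - 1) * cartanE l j)"
    using assms(1) by (simp only: bilE_simple_root_right sum_vec_of)
  then show "sE n j (vec_of n xs) k = vec_of n (sE_list n j xs) k"
    using assms unfolding sE_def reflE_def
    by (auto simp: vec_of_def sE_list_def simple_root_def nth_list_update simp del: upt_Suc)
qed

lemma vec_of_simple_root_list:
  assumes "j \<in> {1..n}"
  shows "vec_of n (simple_root_list n j) = simple_root j"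
proof (rule ext)
  fix k
  show "vec_of n (simple_root_list n j) k = simple_root j k"
    using assms by (auto simp: vec_of_def simple_root_list_def simple_root_def simp del: upt_Suc)
qed

lemma rootsE_in_signed_vec_of:
  assumes len: "\<forall>x\<in>set P. length x = n"
    and simple: "\<forall>j\<in>{1..n}. simple_root_list n j \<in> set P"
    and closed: "\<forall>x\<in>set P. \<forall>j\<in>{1..n}. x = simple_root_list n j \<or> sE_list n j x \<in> set P"
    and \<alpha>: "\<alpha> \<in> rootsE n"
  shows "\<exists>x\<in>set P. \<alpha> = vec_of n x \<or> \<alpha> = (\<lambda>k. - vec_of n x k)"
proof -
  have sE_step: "\<exists>y\<in>set P. sE n j (vec_of n x) = vec_of n y \<or> sE n j (vec_of n x) = (\<lambda>k. - vec_of n y k)"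
    if x: "x \<in> set P" and j: "j \<in> {1..n}" for x j
  proof (cases "x = simple_root_list n j")
    case True
    then have "sE n j (vec_of n x) = (\<lambda>k. - vec_of n x k)"
      using sE_simple_root[OF j] vec_of_simple_root_list[OF j] by simp
    then show ?thesis using x by blast
  next
    case False
    then have "sE_list n j x \<in> set P" using closed x j by blast
    moreover have "sE n j (vec_of n x) = vec_of n (sE_list n j x)"
      using sE_vec_of[OF j] len x by blast
    ultimately show ?thesis by blast
  qed
  have "\<exists>x\<in>set P. w (simple_root k) = vec_of n x \<or> w (simple_root k) = (\<lambda>k. - vec_of n x k)"
    if "w \<in> genW n {1..n}" "k \<in> {1..n}" for w k
    using that
  proof (induction rule: genW.induct)
    case genW_id
    then show ?case using simple vec_of_simple_root_list by force
  next
    case (genW_step w j)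
    then obtain x where "x \<in> set P" "w (simple_root k) = vec_of n x \<or> w (simple_root k) = (\<lambda>k. - vec_of n x k)"
      by blast
    then show ?case using sE_step[of x j] genW_step.hyps(2) by (auto simp: sE_uminus)
  qed
  then show ?thesis using \<alpha> unfolding rootsE_def WeylE_def by blast
qed

text \<open>The certificates below are recursive functions rather than quantified formulas so that
  \<open>code_simp\<close> only ever evaluates \<open>sE_list\<close> at concrete indices and concrete vectors.\<close>

fun reflects_into :: "nat \<Rightarrow> int list list \<Rightarrow> nat list \<Rightarrow> int list \<Rightarrow> bool" where
  "reflects_into n P [] x \<longleftrightarrow> True"
| "reflects_into n P (j # J) x \<longleftrightarrow>
     (x = simple_root_list n j \<or> sE_list n j x \<in> set P) \<and> reflects_into n P J x"

lemma reflects_into_iff: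
  "reflects_into n P J x \<longleftrightarrow> (\<forall>j\<in>set J. x = simple_root_list n j \<or> sE_list n j x \<in> set P)"
  by (induction J) auto

fun some_reflection_into :: "nat \<Rightarrow> nat list \<Rightarrow> int list list \<Rightarrow> int list \<Rightarrow> bool" where
  "some_reflection_into n [] R x \<longleftrightarrow> False"
| "some_reflection_into n (j # J) R x \<longleftrightarrow> sE_list n j x \<in> set R \<or> some_reflection_into n J R x"

lemma some_reflection_into_iff:
  "some_reflection_into n J R x \<longleftrightarrow> (\<exists>j\<in>set J. sE_list n j x \<in> set R)"
  by (induction J) auto

text \<open>The list is read newest-first: each entry is mapped by some \<open>s\<^sub>j\<close>, \<open>j \<in> J\<close>, to a later
  entry or into the base \<open>B\<close>.\<close>

fun parabolic_chain :: "nat \<Rightarrow> nat list \<Rightarrow> int list list \<Rightarrow> int list list \<Rightarrow> bool" where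
  "parabolic_chain n J B [] \<longleftrightarrow> True"
| "parabolic_chain n J B (x # xs) \<longleftrightarrow> some_reflection_into n J (xs @ B) x \<and> parabolic_chain n J B xs"

lemma parabolic_chain_wordE:
  assumes "parabolic_chain n J (map (simple_root_list n) ns) xs"
    and ns: "set ns \<subseteq> {1..n}" and J: "set J \<subseteq> {1..n}"
    and "\<forall>y\<in>set xs. length y = n"
    and "x \<in> set xs \<union> simple_root_list n ` set ns"
  shows "\<exists>ws j. set ws \<subseteq> set J \<and> j \<in> {1..n} \<and> vec_of n x = wordE n ws (simple_root j)"
  using assms(1,4,5)
proof (induction xs arbitrary: x)
  case Nil
  then obtain j where "j \<in> {1..n}" "x = simple_root_list n j" using ns by auto
  then show ?case using vec_of_simple_root_list by (intro exI[of _ "[]"]) auto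
next
  case (Cons y xs)
  show ?case
  proof (cases "x \<in> set xs \<union> simple_root_list n ` set ns")
    case True
    with Cons show ?thesis by simp
  next
    case False
    then have "x = y" using Cons.prems(3) by simp
    obtain j where j: "j \<in> set J" "sE_list n j y \<in> set xs \<union> simple_root_list n ` set ns"
      using Cons.prems(1) by (auto simp: some_reflection_into_iff)
    then obtain ws k where ws: "set ws \<subseteq> set J" "k \<in> {1..n}"
      and ws_y: "vec_of n (sE_list n j y) = wordE n ws (simple_root k)"
      using Cons.IH[OF _ _ j(2)] Cons.prems(1,2) by auto
    have jn: "j \<in> {1..n}" using j J by auto
    have "vec_of n y = sE n j (vec_of n (sE_list n j y))"
      using sE_vec_of[OF jn, of y] sE_sE[OF jn, of "vec_of n y"] Cons.prems(2) by simp
    then have "vec_of n x = wordE n (j # ws) (simple_root k)" using ws_y \<open>x = y\<close> by simp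
    then show ?thesis using ws j by (intro exI[of _ "j # ws"] exI[of _ k]) auto
  qed
qed

lemma reflE_mem_double_coset_of_root_certificate:
  assumes ns: "set ns = {1..n}" and J: "set J = {1..n} - {i}"
    and P: "P = map (simple_root_list n) ns @ Q"
    and len: "list_all (\<lambda>x. length x = n) P"
    and closed: "list_all (reflects_into n P ns) P"
    and chain: "parabolic_chain n J (map (simple_root_list n) ns) (rev Q)"
    and \<alpha>: "\<alpha> \<in> rootsE n"
  shows "reflE n \<alpha> \<in> genW n ({1..n} - {i}) \<union>
           {u \<circ> sE n i \<circ> v | u v. u \<in> genW n ({1..n} - {i}) \<and> v \<in> genW n ({1..n} - {i})}"
proof -
  obtain x where x: "x \<in> set P" and \<alpha>_x: "\<alpha> = vec_of n x \<or> \<alpha> = (\<lambda>k. - vec_of n x k)"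
    using rootsE_in_signed_vec_of[OF _ _ _ \<alpha>, of P] len closed P ns
    by (auto simp: list_all_iff reflects_into_iff)
  obtain ws j where ws: "set ws \<subseteq> {1..n} - {i}" and j: "j \<in> {1..n}"
    and x_ws: "vec_of n x = wordE n ws (simple_root j)"
    using parabolic_chain_wordE[OF chain, of x] x ns J len P by (auto simp: list_all_iff)
  obtain \<beta> where "\<alpha> = wordE n ws \<beta>" "reflE n \<beta> = sE n j"
    using \<alpha>_x x_ws wordE_uminus[of n ws] reflE_uminus_root[of n] unfolding sE_def by metis
  then show ?thesis using reflE_wordE_mem_double_coset[OF ws j] by simp
qed

text \<open>Roots are listed by height, so the reflection predecessor demanded by \<open>parabolic_chain\<close>
  always comes earlier.\<close>

definition E6_higher_positive_roots :: "int list list" where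
  "E6_higher_positive_roots = [
    [1,0,1,0,0,0], [0,1,0,1,0,0], [0,0,1,1,0,0], [0,0,0,1,1,0], [0,0,0,0,1,1], [1,0,1,1,0,0],
    [0,1,1,1,0,0], [0,1,0,1,1,0], [0,0,1,1,1,0], [0,0,0,1,1,1], [1,1,1,1,0,0], [1,0,1,1,1,0],
    [0,1,1,1,1,0], [0,1,0,1,1,1], [0,0,1,1,1,1], [1,1,1,1,1,0], [1,0,1,1,1,1], [0,1,1,2,1,0],
    [0,1,1,1,1,1], [1,1,1,2,1,0], [1,1,1,1,1,1], [0,1,1,2,1,1], [1,1,2,2,1,0], [1,1,1,2,1,1],
    [0,1,1,2,2,1], [1,1,2,2,1,1], [1,1,1,2,2,1], [1,1,2,2,2,1], [1,1,2,3,2,1], [1,2,2,3,2,1]]"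

definition E7_higher_positive_roots :: "int list list" where
  "E7_higher_positive_roots = [
    [1,0,1,0,0,0,0], [0,1,0,1,0,0,0], [0,0,1,1,0,0,0], [0,0,0,1,1,0,0], [0,0,0,0,1,1,0], [0,0,0,0,0,1,1],
    [1,0,1,1,0,0,0], [0,1,1,1,0,0,0], [0,1,0,1,1,0,0], [0,0,1,1,1,0,0], [0,0,0,1,1,1,0], [0,0,0,0,1,1,1],
    [1,1,1,1,0,0,0], [1,0,1,1,1,0,0], [0,1,1,1,1,0,0], [0,1,0,1,1,1,0], [0,0,1,1,1,1,0], [0,0,0,1,1,1,1],
    [1,1,1,1,1,0,0], [1,0,1,1,1,1,0], [0,1,1,2,1,0,0], [0,1,1,1,1,1,0], [0,1,0,1,1,1,1], [0,0,1,1,1,1,1],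
    [1,1,1,2,1,0,0], [1,1,1,1,1,1,0], [0,1,1,2,1,1,0], [0,1,1,1,1,1,1], [1,0,1,1,1,1,1], [1,1,2,2,1,0,0],
    [1,1,1,2,1,1,0], [0,1,1,2,2,1,0], [1,1,1,1,1,1,1], [0,1,1,2,1,1,1], [1,1,2,2,1,1,0], [1,1,1,2,2,1,0],
    [1,1,1,2,1,1,1], [0,1,1,2,2,1,1], [1,1,2,2,2,1,0], [1,1,2,2,1,1,1], [1,1,1,2,2,1,1], [0,1,1,2,2,2,1],
    [1,1,2,3,2,1,0], [1,1,2,2,2,1,1], [1,1,1,2,2,2,1], [1,2,2,3,2,1,0], [1,1,2,3,2,1,1], [1,1,2,2,2,2,1],
    [1,2,2,3,2,1,1], [1,1,2,3,2,2,1], [1,2,2,3,2,2,1], [1,1,2,3,3,2,1], [1,2,2,3,3,2,1], [1,2,2,4,3,2,1],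
    [1,2,3,4,3,2,1], [2,2,3,4,3,2,1]]"

definition E6_positive_roots :: "int list list" where
  "E6_positive_roots = map (simple_root_list 6) [1..<7] @ E6_higher_positive_roots"

definition E7_positive_roots :: "int list list" where
  "E7_positive_roots = map (simple_root_list 7) [1..<8] @ E7_higher_positive_roots"

lemma E6_positive_roots_length: "list_all (\<lambda>x. length x = 6) E6_positive_roots"
  by code_simp

lemma E6_positive_roots_reflects_into:
  "list_all (reflects_into 6 E6_positive_roots [1..<7]) E6_positive_roots"
  by code_simp

lemma E6_parabolic_chain:
  "parabolic_chain 6 [2..<7] (map (simple_root_list 6) [1..<7]) (rev E6_higher_positive_roots)"
  by code_simp

lemma E7_positive_roots_length: "list_all (\<lambda>x. length x = 7) E7_positive_roots"
  by code_simp

lemma E7_positive_roots_reflects_into: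
  "list_all (reflects_into 7 E7_positive_roots [1..<8]) E7_positive_roots"
  by code_simp

lemma E7_parabolic_chain:
  "parabolic_chain 7 [1..<7] (map (simple_root_list 7) [1..<8]) (rev E7_higher_positive_roots)"
  by code_simp

theorem lemma2p4:
  fixes n i :: nat and \<alpha> :: "nat \<Rightarrow> int"
  assumes "(n = 6 \<and> i = 1) \<or> (n = 7 \<and> i = 7)"
    and "\<alpha> \<in> rootsE n"
  shows "reflE n \<alpha> \<in> genW n ({1..n} - {i}) \<union>
           {u \<circ> sE n i \<circ> v | u v. u \<in> genW n ({1..n} - {i}) \<and> v \<in> genW n ({1..n} - {i})}"
  using assms(1)
proof
  assume "n = 6 \<and> i = 1"
  then have n: "n = 6" and i: "i = 1" by auto
  show ?thesis
    unfolding n i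
    by (rule reflE_mem_double_coset_of_root_certificate[OF _ _ E6_positive_roots_def
          E6_positive_roots_length E6_positive_roots_reflects_into E6_parabolic_chain])
      (use assms(2) n in auto)
next
  assume "n = 7 \<and> i = 7"
  then have n: "n = 7" and i: "i = 7" by auto
  show ?thesis
    unfolding n i
    by (rule reflE_mem_double_coset_of_root_certificate[OF _ _ E7_positive_roots_def
          E7_positive_roots_length E7_positive_roots_reflects_into E7_parabolic_chain])
      (use assms(2) n in auto)
qed

end
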